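(* Let $n\geq 1$ and for $1\leq k\leq n$ let $c(k)$ denote the number of Boolean functions on $n$ variables that are canalizing for exactly $k$ variables. Then: for $1<k<n$, $c(k)=\sum_{r=k}^n\binom{r}{k}(-1)^{r-k}\binom{n}{r}2^{r+1}\bigl(2^{2^{n-r}}-1\bigr)$; for $1<k=n$, $c(n)=2+2^{n+1}$; for $1=k<n$, $c(1)=2n\bigl(2^{1+2^{n-1}}-3\bigr)+\sum_{r=2}^n r(-1)^{r-1}\binom{n}{r}2^{r+1}\bigl(2^{2^{n-r}}-1\bigr)$; for $1=k=n$, $c(1)=4$.
   Context: A Boolean function on $n$ variables is a map $f:\{0,1\}^n\to\{0,1\}$, variables indexed by $[n]=\{0,\dots,n-1\}$. $f$ is canalizing for variable $i$ if there exist $s,v\in\{0,1\}$ such that for all $x\in\{0,1\}^n$, $x_i=s$ implies $f(x)=v$. "Canalizing for exactly $k$ variables" means the set of $i\in[n]$ for which $f$ is canalizing for variable $i$ has exactly $k$ elements. *)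

theory Defs
  imports "HOL-Library.FuncSet"
begin

text \<open>Inputs in {0,1}^n are encoded as maps nat => bool vanishing (False) at all indices >= n.\<close>
definition bool_inputs :: "nat \<Rightarrow> (nat \<Rightarrow> bool) set" where
  "bool_inputs n = {x. \<forall>i\<ge>n. \<not> x i}"

definition bool_funs :: "nat \<Rightarrow> ((nat \<Rightarrow> bool) \<Rightarrow> bool) set" where
  "bool_funs n = bool_inputs n \<rightarrow>\<^sub>E (UNIV :: bool set)"

definition canalizing_var :: "nat \<Rightarrow> ((nat \<Rightarrow> bool) \<Rightarrow> bool) \<Rightarrow> nat \<Rightarrow> bool" where
  "canalizing_var n f i \<longleftrightarrow>
     (\<exists>s v. \<forall>x\<in>bool_inputs n. x i = s \<longrightarrow> f x = v)"

definition canalizing_set :: "nat \<Rightarrow> ((nat \<Rightarrow> bool) \<Rightarrow> bool) \<Rightarrow> nat set" where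
  "canalizing_set n f = {i. i < n \<and> canalizing_var n f i}"

definition canal_count :: "nat \<Rightarrow> nat \<Rightarrow> nat" where
  "canal_count n k = card {f \<in> bool_funs n. card (canalizing_set n f) = k}"

end

(* A nonconstant Boolean function that is canalizing in every variable of a set S with |S| = r
   is described by a canalizing pattern s in {0,1}^S together with a common canalized value v:
   it takes the value v on every input with x_i = s_i for some i in S, and is not identically v
   on the complementary subcube of dimension n - r.  For r >= 2 the pair (s, v) is unique, so
   there are 2^(r+1) (2^(2^(n-r)) - 1) such functions; for r = 1 the literals x_i and not x_i
   admit two patterns each, which removes 2 from this count.  Moebius inversion on the subset
   lattice, with weights (-1)^(r-k) C(r,k), turns these counts into the number of functions with
   exactly k canalizing variables; the two constant functions, canalizing in all n variables,
   are added separately. *)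

theory Submission
  imports Defs
begin

lemma sum_alternating_choose_mult_choose:
  assumes "m \<le> M"
  shows "(\<Sum>r=k..M. (-1) ^ (r - k) * of_nat (r choose k) * of_nat (m choose r) :: 'a :: comm_ring_1)
         = (if m = k then 1 else 0)"
proof (cases "k \<le> m")
  case False
  then show ?thesis by (intro trans[OF sum.neutral]) (auto simp: binomial_eq_0)
next
  case True
  have "(\<Sum>r=k..M. (-1) ^ (r - k) * of_nat (r choose k) * of_nat (m choose r) :: 'a)
      = (\<Sum>r=k..m. of_nat (m choose k) * ((-1) ^ (r - k) * of_nat ((m - k) choose (r - k))))"
  proof (rule sum.mono_neutral_cong_right)
    fix r assume "r \<in> {k..m}"
    then have "(m choose r) * (r choose k) = (m choose k) * ((m - k) choose (r - k))"
      by (intro choose_mult) auto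
    then have "of_nat (r choose k) * of_nat (m choose r)
             = (of_nat (m choose k) * of_nat ((m - k) choose (r - k)) :: 'a)"
      by (metis mult.commute of_nat_mult)
    then show "(-1) ^ (r - k) * of_nat (r choose k) * of_nat (m choose r)
             = of_nat (m choose k) * ((-1) ^ (r - k) * of_nat ((m - k) choose (r - k)) :: 'a)"
      by (metis mult.assoc mult.left_commute)
  qed (use assms in \<open>auto simp: binomial_eq_0\<close>)
  also have "\<dots> = of_nat (m choose k) * (\<Sum>j=0..m-k. (-1) ^ j * of_nat ((m - k) choose j))"
    using sum.shift_bounds_cl_nat_ivl[of "\<lambda>r. (-1) ^ (r - k) * of_nat ((m - k) choose (r - k)) :: 'a"
        0 k "m - k"] True
    by (simp flip: sum_distrib_left)
  also have "\<dots> = (if m = k then 1 else 0)"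
    using choose_alternating_sum[of "m - k", where 'a = 'a] True by (simp add: atLeast0AtMost)
  finally show ?thesis .
qed

lemma card_exactly_inclusion_exclusion:
  fixes A :: "'a set" and N :: "'a \<Rightarrow> 'b set"
  assumes "finite A" "finite U" "\<And>f. f \<in> A \<Longrightarrow> N f \<subseteq> U"
  shows "int (card {f\<in>A. card (N f) = k}) =
    (\<Sum>r=k..card U. (-1) ^ (r - k) * int (r choose k) *
        (\<Sum>S | S \<subseteq> U \<and> card S = r. int (card {f\<in>A. S \<subseteq> N f})))"
proof -
  have card_subsets: "(\<Sum>S | S \<subseteq> U \<and> card S = r. int (card {f\<in>A. S \<subseteq> N f}))
      = (\<Sum>f\<in>A. int (card (N f) choose r))" for r
  proof -
    have "(\<Sum>S | S \<subseteq> U \<and> card S = r. int (card {f\<in>A. S \<subseteq> N f}))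
        = (\<Sum>S | S \<subseteq> U \<and> card S = r. \<Sum>f\<in>A. if S \<subseteq> N f then 1 else 0)"
      using assms(1) by (simp add: sum.If_cases Int_def)
    also have "\<dots> = (\<Sum>f\<in>A. \<Sum>S | S \<subseteq> U \<and> card S = r. if S \<subseteq> N f then 1 else 0)"
      by (rule sum.swap)
    also have "\<dots> = (\<Sum>f\<in>A. int (card {S. S \<subseteq> N f \<and> card S = r}))"
    proof (rule sum.cong)
      fix f assume "f \<in> A"
      then have "{S. S \<subseteq> U \<and> card S = r} \<inter> {S. S \<subseteq> N f} = {S. S \<subseteq> N f \<and> card S = r}"
        using assms(3) by auto
      then show "(\<Sum>S | S \<subseteq> U \<and> card S = r. if S \<subseteq> N f then 1 else 0)
               = int (card {S. S \<subseteq> N f \<and> card S = r})"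
        using assms(2) by (simp add: sum.If_cases)
    qed simp
    also have "\<dots> = (\<Sum>f\<in>A. int (card (N f) choose r))"
      using assms by (intro sum.cong refl) (simp add: n_subsets finite_subset[of _ U])
    finally show ?thesis .
  qed
  have "(\<Sum>r=k..card U. (-1) ^ (r - k) * int (r choose k) *
          (\<Sum>S | S \<subseteq> U \<and> card S = r. int (card {f\<in>A. S \<subseteq> N f})))
      = (\<Sum>r=k..card U. \<Sum>f\<in>A. (-1) ^ (r - k) * int (r choose k) * int (card (N f) choose r))"
    by (simp add: card_subsets sum_distrib_left)
  also have "\<dots> = (\<Sum>f\<in>A. \<Sum>r=k..card U. (-1) ^ (r - k) * int (r choose k) * int (card (N f) choose r))"
    by (rule sum.swap)
  also have "\<dots> = (\<Sum>f\<in>A. if card (N f) = k then 1 else 0)"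
    using assms by (intro sum.cong refl sum_alternating_choose_mult_choose card_mono)
  also have "\<dots> = int (card {f\<in>A. card (N f) = k})"
    using assms(1) by (simp add: sum.If_cases Int_def)
  finally show ?thesis by simp
qed

definition subcube :: "nat \<Rightarrow> nat set \<Rightarrow> (nat \<Rightarrow> bool) \<Rightarrow> (nat \<Rightarrow> bool) set" where
  "subcube n S s = {x\<in>bool_inputs n. \<forall>i\<in>S. x i = s i}"

lemma subcube_empty [simp]: "subcube n {} s = bool_inputs n"
  by (simp add: subcube_def)

lemma bij_betw_restrict_subcube:
  assumes "S \<subseteq> {..<n}"
  shows "bij_betw (\<lambda>x. restrict x {..<n}) (subcube n S s)
           (\<Pi>\<^sub>E i\<in>{..<n}. if i \<in> S then {s i} else UNIV)"
proof (rule bij_betwI')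
  fix x y assume "x \<in> subcube n S s" "y \<in> subcube n S s"
  then show "(restrict x {..<n} = restrict y {..<n}) = (x = y)"
    by (auto simp: subcube_def bool_inputs_def fun_eq_iff) (metis not_le)+
next
  fix x assume "x \<in> subcube n S s"
  then show "restrict x {..<n} \<in> (\<Pi>\<^sub>E i\<in>{..<n}. if i \<in> S then {s i} else UNIV)"
    by (auto simp: subcube_def)
next
  fix y assume y: "y \<in> (\<Pi>\<^sub>E i\<in>{..<n}. if i \<in> S then {s i} else UNIV)"
  let ?x = "\<lambda>i. i < n \<and> y i"
  have "?x \<in> subcube n S s"
    using y assms by (auto simp: subcube_def bool_inputs_def PiE_iff split: if_splits)
  moreover have "y = restrict ?x {..<n}"
    using y by (auto simp: fun_eq_iff PiE_def extensional_def)
  ultimately show "\<exists>x\<in>subcube n S s. y = restrict x {..<n}" by blast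
qed

lemma
  assumes "S \<subseteq> {..<n}"
  shows finite_subcube: "finite (subcube n S s)"
    and card_subcube: "card (subcube n S s) = 2 ^ (n - card S)"
proof -
  let ?B = "\<lambda>i. if i \<in> S then {s i} else (UNIV :: bool set)"
  note bij = bij_betw_restrict_subcube[OF assms, of s]
  show "finite (subcube n S s)"
    using bij_betw_finite[OF bij] by (simp add: finite_PiE)
  have "card (subcube n S s) = (\<Prod>i<n. card (?B i))"
    using bij_betw_same_card[OF bij] by (simp add: card_PiE)
  also have "\<dots> = (\<Prod>i<n. if i \<in> S then 1 else 2)"
    by (intro prod.cong) auto
  also have "\<dots> = 2 ^ card ({..<n} - S)"
    by (simp add: prod.If_cases Diff_eq)
  also have "card ({..<n} - S) = n - card S"
    using assms by (simp add: card_Diff_subset finite_subset)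
  finally show "card (subcube n S s) = 2 ^ (n - card S)" .
qed

lemma finite_bool_inputs: "finite (bool_inputs n)"
  using finite_subcube[of "{}" n] by simp

lemma subcube_nonempty:
  assumes "S \<subseteq> {..<n}"
  obtains x where "x \<in> subcube n S s"
  using card_subcube[OF assms, of s] by fastforce

lemma finite_bool_funs: "finite (bool_funs n)"
  by (simp add: bool_funs_def finite_PiE finite_bool_inputs)

lemma card_bool_funs_agreeing_on:
  assumes "D \<subseteq> bool_inputs n"
  shows "card {f\<in>bool_funs n. \<forall>x\<in>D. f x = g x} = 2 ^ card (bool_inputs n - D)"
proof -
  let ?B = "\<lambda>x. if x \<in> D then {g x} else (UNIV :: bool set)"
  have "{f\<in>bool_funs n. \<forall>x\<in>D. f x = g x} = (\<Pi>\<^sub>E x\<in>bool_inputs n. ?B x)"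
    using assms by (auto simp: bool_funs_def PiE_def Pi_def)
  then have "card {f\<in>bool_funs n. \<forall>x\<in>D. f x = g x} = (\<Prod>x\<in>bool_inputs n. card (?B x))"
    by (simp add: card_PiE finite_bool_inputs)
  also have "\<dots> = (\<Prod>x\<in>bool_inputs n. if x \<in> D then 1 else 2)"
    by (intro prod.cong) auto
  finally show ?thesis
    by (simp add: finite_bool_inputs prod.If_cases Diff_eq)
qed

definition const_fun :: "nat \<Rightarrow> bool \<Rightarrow> (nat \<Rightarrow> bool) \<Rightarrow> bool" where
  "const_fun n v = restrict (\<lambda>_. v) (bool_inputs n)"

definition nonconst_funs :: "nat \<Rightarrow> ((nat \<Rightarrow> bool) \<Rightarrow> bool) set" where
  "nonconst_funs n = bool_funs n - range (const_fun n)"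

lemma const_fun_in_bool_funs: "const_fun n v \<in> bool_funs n"
  by (simp add: const_fun_def bool_funs_def)

lemma eq_const_fun_iff:
  assumes "f \<in> bool_funs n"
  shows "f = const_fun n v \<longleftrightarrow> (\<forall>x\<in>bool_inputs n. f x = v)"
  using assms by (auto simp: const_fun_def bool_funs_def fun_eq_iff PiE_def extensional_def)

lemma inj_const_fun: "inj (const_fun n)"
proof -
  have "(\<lambda>_. False) \<in> bool_inputs n" by (simp add: bool_inputs_def)
  then show ?thesis by (auto simp: inj_def const_fun_def fun_eq_iff)
qed

lemma canalizing_set_const_fun: "canalizing_set n (const_fun n v) = {..<n}"
  by (auto simp: canalizing_set_def canalizing_var_def const_fun_def)

lemma canal_count_eq_nonconst:
  "int (canal_count n k)
     = int (card {f\<in>nonconst_funs n. card (canalizing_set n f) = k}) + (if k = n then 2 else 0)"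
proof -
  let ?P = "\<lambda>f. card (canalizing_set n f) = k"
  have "{f\<in>bool_funs n. ?P f} = {f\<in>nonconst_funs n. ?P f} \<union> {f\<in>range (const_fun n). ?P f}"
    using const_fun_in_bool_funs by (auto simp: nonconst_funs_def)
  moreover have "{f\<in>range (const_fun n). ?P f} = (if k = n then range (const_fun n) else {})"
    by (auto simp: canalizing_set_const_fun)
  moreover have "card (range (const_fun n)) = 2"
    using inj_const_fun by (simp add: card_image)
  moreover have "finite (nonconst_funs n)"
    by (simp add: nonconst_funs_def finite_bool_funs)
  ultimately show ?thesis
    by (simp add: canal_count_def card_Un_disjoint nonconst_funs_def Int_def)
qed

definition canalizing_region :: "nat \<Rightarrow> nat set \<Rightarrow> (nat \<Rightarrow> bool) \<Rightarrow> (nat \<Rightarrow> bool) set" where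
  "canalizing_region n S s = {x\<in>bool_inputs n. \<exists>i\<in>S. x i = s i}"

lemma bool_inputs_Diff_canalizing_region:
  "bool_inputs n - canalizing_region n S s = subcube n S (\<lambda>i. \<not> s i)"
  by (auto simp: canalizing_region_def subcube_def)

text \<open>All variables of \<open>S\<close> canalize to the same value, because any two canalizing
  inputs can be realized simultaneously.\<close>
lemma subset_canalizing_set_iff:
  assumes "S \<subseteq> {..<n}"
  shows "S \<subseteq> canalizing_set n f
    \<longleftrightarrow> (\<exists>s\<in>S \<rightarrow>\<^sub>E UNIV. \<exists>v. \<forall>x\<in>canalizing_region n S s. f x = v)"
proof
  assume "S \<subseteq> canalizing_set n f"
  then have "\<forall>i\<in>S. \<exists>p. \<forall>x\<in>bool_inputs n. x i = fst p \<longrightarrow> f x = snd p"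
    by (auto simp: canalizing_set_def canalizing_var_def)
  then obtain p
    where p: "\<And>i x. i \<in> S \<Longrightarrow> x \<in> bool_inputs n \<Longrightarrow> x i = fst (p i) \<Longrightarrow> f x = snd (p i)"
    by metis
  define t w where "t i = fst (p i)" and "w i = snd (p i)" for i
  note tw = p[folded t_def w_def]
  have "w i = w j" if ij: "i \<in> S" "j \<in> S" for i j
  proof -
    have "{i, j} \<subseteq> {..<n}" using assms ij by auto
    then obtain x where "x \<in> subcube n {i, j} (\<lambda>m. if m = i then t i else t j)"
      by (rule subcube_nonempty)
    then show ?thesis
      using tw ij by (auto simp: subcube_def split: if_splits)
  qed
  then obtain v where "\<forall>i\<in>S. w i = v" by blast
  then have "\<forall>x\<in>canalizing_region n S (restrict t S). f x = v"
    using tw by (auto simp: canalizing_region_def)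
  then show "\<exists>s\<in>S \<rightarrow>\<^sub>E UNIV. \<exists>v. \<forall>x\<in>canalizing_region n S s. f x = v"
    by (intro bexI[of _ "restrict t S"]) auto
next
  assume "\<exists>s\<in>S \<rightarrow>\<^sub>E UNIV. \<exists>v. \<forall>x\<in>canalizing_region n S s. f x = v"
  then obtain s v where v: "\<forall>x\<in>canalizing_region n S s. f x = v" by blast
  show "S \<subseteq> canalizing_set n f"
  proof
    fix i assume i: "i \<in> S"
    then have "\<forall>x\<in>bool_inputs n. x i = s i \<longrightarrow> f x = v"
      using v by (auto simp: canalizing_region_def)
    then show "i \<in> canalizing_set n f"
      using assms i by (auto simp: canalizing_set_def canalizing_var_def)
  qed
qed

lemma card_nonconst_constant_on_canalizing_region:
  assumes "S \<subseteq> {..<n}" "S \<noteq> {}"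
  shows "card ({f\<in>bool_funs n. \<forall>x\<in>canalizing_region n S s. f x = v} - range (const_fun n))
           = 2 ^ 2 ^ (n - card S) - 1"
proof -
  let ?A = "{f\<in>bool_funs n. \<forall>x\<in>canalizing_region n S s. f x = v}"
  obtain i where i: "i \<in> S" using assms(2) by blast
  then have "{i} \<subseteq> {..<n}" using assms(1) by auto
  then obtain x where "x \<in> subcube n {i} s"
    by (rule subcube_nonempty)
  then have x: "x \<in> canalizing_region n S s"
    using i by (auto simp: subcube_def canalizing_region_def)
  have "?A \<inter> range (const_fun n) = {const_fun n v}"
    using x const_fun_in_bool_funs by (auto simp: const_fun_def canalizing_region_def)
  moreover have "card ?A = 2 ^ 2 ^ (n - card S)"
  proof -
    have "canalizing_region n S s \<subseteq> bool_inputs n"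
      by (auto simp: canalizing_region_def)
    from card_bool_funs_agreeing_on[OF this, of "\<lambda>_. v"]
    show ?thesis by (simp add: bool_inputs_Diff_canalizing_region card_subcube[OF assms(1)])
  qed
  ultimately show ?thesis
    by (simp add: card_Diff_subset_Int finite_bool_funs)
qed

text \<open>With two variables \<open>i \<noteq> j\<close> in \<open>S\<close>, some input hits both canalizing regions, so the
  canalized values agree; if the canalizing inputs differed at some \<open>i\<close>, the two regions
  would cover every input and \<open>f\<close> would be constant.\<close>
lemma canalizing_pattern_unique:
  assumes "S \<subseteq> {..<n}" "2 \<le> card S" "s \<in> S \<rightarrow>\<^sub>E UNIV" "s' \<in> S \<rightarrow>\<^sub>E UNIV"
    and "f \<in> nonconst_funs n"
    and v: "\<forall>x\<in>canalizing_region n S s. f x = v"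
    and v': "\<forall>x\<in>canalizing_region n S s'. f x = v'"
  shows "s = s' \<and> v = v'"
proof
  have "\<not> card S \<le> Suc 0" using assms(2) by simp
  moreover have "finite S" using finite_subset[OF assms(1)] by simp
  ultimately obtain i j where ij: "i \<in> S" "j \<in> S" "i \<noteq> j"
    using card_le_Suc0_iff_eq by blast
  have "{i, j} \<subseteq> {..<n}" using assms(1) ij by auto
  then obtain x where "x \<in> subcube n {i, j} (\<lambda>m. if m = i then s i else s' j)"
    by (rule subcube_nonempty)
  then have "x \<in> canalizing_region n S s" "x \<in> canalizing_region n S s'"
    using ij by (auto simp: subcube_def canalizing_region_def)
  then show "v = v'" using v v' by auto
  show "s = s'"
  proof (rule ccontr)
    assume "s \<noteq> s'"
    moreover have "s \<in> extensional S" "s' \<in> extensional S"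
      using assms(3,4) by (simp_all add: PiE_iff)
    ultimately obtain k where k: "k \<in> S" "s k \<noteq> s' k"
      using extensionalityI by blast
    have "\<forall>x\<in>bool_inputs n. f x = v"
    proof
      fix x assume "x \<in> bool_inputs n"
      then have "x \<in> canalizing_region n S s \<or> x \<in> canalizing_region n S s'"
        using k by (auto simp: canalizing_region_def)
      then show "f x = v" using v v' \<open>v = v'\<close> by auto
    qed
    then show False
      using assms(5) eq_const_fun_iff by (auto simp: nonconst_funs_def)
  qed
qed

lemma card_nonconst_canalizing_on:
  assumes "S \<subseteq> {..<n}" "2 \<le> card S"
  shows "card {f\<in>nonconst_funs n. S \<subseteq> canalizing_set n f}
           = 2 ^ (card S + 1) * (2 ^ 2 ^ (n - card S) - 1)"
proof -
  define J where "J = (S \<rightarrow>\<^sub>E (UNIV :: bool set)) \<times> (UNIV :: bool set)"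
  define K where "K p = {f\<in>bool_funs n. \<forall>x\<in>canalizing_region n S (fst p). f x = snd p}
                          - range (const_fun n)" for p
  have finite_S: "finite S" using assms(1) finite_subset by blast
  have S_ne: "S \<noteq> {}" using assms(2) by auto
  have "{f\<in>nonconst_funs n. S \<subseteq> canalizing_set n f} = \<Union> (K ` J)"
    unfolding subset_canalizing_set_iff[OF assms(1)] by (force simp: nonconst_funs_def K_def J_def)
  also have "card \<dots> = (\<Sum>p\<in>J. card (K p))"
  proof (rule card_UN_disjoint)
    show "finite J" using finite_S by (simp add: J_def finite_PiE)
    show "\<forall>p\<in>J. finite (K p)" by (simp add: K_def finite_bool_funs)
    show "\<forall>p\<in>J. \<forall>q\<in>J. p \<noteq> q \<longrightarrow> K p \<inter> K q = {}"
    proof (intro ballI impI)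
      fix p q assume pq: "p \<in> J" "q \<in> J" "p \<noteq> q"
      show "K p \<inter> K q = {}"
      proof (rule ccontr)
        assume "K p \<inter> K q \<noteq> {}"
        then obtain f where "f \<in> K p" "f \<in> K q" by blast
        then have "fst p = fst q \<and> snd p = snd q"
          using canalizing_pattern_unique[OF assms, of "fst p" "fst q" f "snd p" "snd q"] pq(1,2)
          by (simp add: J_def K_def nonconst_funs_def mem_Times_iff)
        then show False using pq(3) by (simp add: prod_eq_iff)
      qed
    qed
  qed
  also have "\<dots> = card J * (2 ^ 2 ^ (n - card S) - 1)"
    using card_nonconst_constant_on_canalizing_region[OF assms(1) S_ne] by (simp add: K_def)
  also have "card J = 2 ^ (card S + 1)"
    using finite_S by (simp add: J_def card_cartesian_product card_PiE)
  finally show ?thesis .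
qed

lemma card_bool_funs_constant_on:
  assumes "D \<subseteq> bool_inputs n" "D \<noteq> {}"
  shows "card {f\<in>bool_funs n. \<exists>v. \<forall>x\<in>D. f x = v} = 2 * 2 ^ card (bool_inputs n - D)"
proof -
  have "{f\<in>bool_funs n. \<exists>v. \<forall>x\<in>D. f x = v} = (\<Union>v. {f\<in>bool_funs n. \<forall>x\<in>D. f x = v})"
    by auto
  also have "card \<dots> = (\<Sum>v\<in>UNIV. card {f\<in>bool_funs n. \<forall>x\<in>D. f x = v})"
    using assms(2) by (intro card_UN_disjoint) (auto simp: finite_bool_funs)
  finally show ?thesis
    using card_bool_funs_agreeing_on[OF assms(1)] by simp
qed

lemma card_bool_funs_depending_only_on_var:
  assumes "i < n"
  shows "card {f\<in>bool_funs n. \<forall>h. \<exists>v. \<forall>x\<in>subcube n {i} (\<lambda>_. h). f x = v} = 4"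
proof -
  define lit where "lit a b = restrict (\<lambda>x. if x i then a else b) (bool_inputs n)" for a b :: bool
  have half_ne: "\<exists>x. x \<in> subcube n {i} (\<lambda>_. h)" for h
    using assms subcube_nonempty[of "{i}" n] by auto
  have "inj (\<lambda>(a, b). lit a b)"
  proof (rule injI, clarify)
    fix a b c d assume eq: "lit a b = lit c d"
    obtain x where x: "x \<in> subcube n {i} (\<lambda>_. True)" using half_ne by blast
    obtain y where y: "y \<in> subcube n {i} (\<lambda>_. False)" using half_ne by blast
    have "lit a b x = lit c d x" "lit a b y = lit c d y" using eq by simp_all
    then show "a = c \<and> b = d" using x y by (simp add: lit_def subcube_def)
  qed
  moreover have "{f\<in>bool_funs n. \<forall>h. \<exists>v. \<forall>x\<in>subcube n {i} (\<lambda>_. h). f x = v}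
      = range (\<lambda>(a, b). lit a b)"
  proof (intro equalityI subsetI)
    fix f assume "f \<in> {f\<in>bool_funs n. \<forall>h. \<exists>v. \<forall>x\<in>subcube n {i} (\<lambda>_. h). f x = v}"
    then have f: "f \<in> bool_funs n" and const: "\<exists>v. \<forall>x\<in>subcube n {i} (\<lambda>_. h). f x = v" for h
      by simp_all
    obtain a where a: "\<forall>x\<in>subcube n {i} (\<lambda>_. True). f x = a" using const by blast
    obtain b where b: "\<forall>x\<in>subcube n {i} (\<lambda>_. False). f x = b" using const by blast
    have "f = lit a b"
    proof (rule extensionalityI[of _ "bool_inputs n"])
      show "f \<in> extensional (bool_inputs n)" using f by (simp add: bool_funs_def PiE_iff)
      show "lit a b \<in> extensional (bool_inputs n)" by (simp add: lit_def)
      show "f x = lit a b x" if "x \<in> bool_inputs n" for x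
        using a b that by (cases "x i") (simp_all add: lit_def subcube_def)
    qed
    then show "f \<in> range (\<lambda>(a, b). lit a b)" by auto
  next
    fix f assume "f \<in> range (\<lambda>(a, b). lit a b)"
    then obtain a b where "f = lit a b" by auto
    then show "f \<in> {f\<in>bool_funs n. \<forall>h. \<exists>v. \<forall>x\<in>subcube n {i} (\<lambda>_. h). f x = v}"
      by (auto simp: lit_def bool_funs_def subcube_def)
  qed
  ultimately show ?thesis
    by (simp add: card_image card_cartesian_product flip: UNIV_Times_UNIV)
qed

lemma card_nonconst_canalizing_var:
  assumes "i < n"
  shows "card {f\<in>nonconst_funs n. canalizing_var n f i} + 6 = 4 * 2 ^ 2 ^ (n - 1)"
proof -
  define A where "A h = {f\<in>bool_funs n. \<exists>v. \<forall>x\<in>subcube n {i} (\<lambda>_. h). f x = v}" for h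
  have A_sub: "A h \<subseteq> bool_funs n" for h
    by (auto simp: A_def)
  have finite_A: "finite (A h)" for h
    using A_sub finite_bool_funs by (rule finite_subset)
  have card_A: "card (A h) = 2 * 2 ^ 2 ^ (n - 1)" for h
  proof -
    have "{i} \<subseteq> {..<n}" using assms by simp
    then obtain x where "x \<in> subcube n {i} (\<lambda>_. h)"
      by (rule subcube_nonempty)
    moreover have "subcube n {i} (\<lambda>_. h) \<subseteq> bool_inputs n"
      by (auto simp: subcube_def)
    ultimately have "card (A h) = 2 * 2 ^ card (bool_inputs n - subcube n {i} (\<lambda>_. h))"
      unfolding A_def by (intro card_bool_funs_constant_on) auto
    also have "bool_inputs n - subcube n {i} (\<lambda>_. h) = subcube n {i} (\<lambda>_. \<not> h)"
      by (auto simp: subcube_def)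
    finally show ?thesis
      using card_subcube[of "{i}" n] assms by simp
  qed
  have card_A_Int: "card (A True \<inter> A False) = 4"
  proof -
    have "A True \<inter> A False = {f\<in>bool_funs n. \<forall>h. \<exists>v. \<forall>x\<in>subcube n {i} (\<lambda>_. h). f x = v}"
      by (auto simp: A_def all_bool_eq)
    then show ?thesis using card_bool_funs_depending_only_on_var[OF assms] by simp
  qed
  have range_const_fun: "range (const_fun n) \<subseteq> A True \<inter> A False"
    using const_fun_in_bool_funs by (auto simp: A_def const_fun_def subcube_def)
  have "canalizing_var n f i \<longleftrightarrow> f \<in> A True \<union> A False" if "f \<in> bool_funs n" for f
  proof -
    have "canalizing_var n f i \<longleftrightarrow> (\<exists>h. f \<in> A h)"
      using that by (simp add: canalizing_var_def A_def subcube_def Ball_def imp_conjL)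
    then show ?thesis by (simp add: ex_bool_eq)
  qed
  then have "{f\<in>nonconst_funs n. canalizing_var n f i} = (A True \<union> A False) - range (const_fun n)"
    using A_sub by (auto simp: nonconst_funs_def)
  moreover have "card (A True \<union> A False) + 4 = 4 * 2 ^ 2 ^ (n - 1)"
    using card_Un_Int[OF finite_A finite_A, of True False] card_A card_A_Int by simp
  moreover have "card (A True \<union> A False - range (const_fun n)) = card (A True \<union> A False) - 2"
    using range_const_fun inj_const_fun by (subst card_Diff_subset) (auto simp: card_image)
  moreover have "4 \<le> card (A True \<union> A False)"
    using card_A_Int card_mono[of "A True \<union> A False" "A True \<inter> A False"] finite_A by auto
  ultimately show ?thesis by simp
qed

lemma int_card_nonconst_canalizing_on:
  assumes "S \<subseteq> {..<n}" "S \<noteq> {}"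
  shows "int (card {f\<in>nonconst_funs n. S \<subseteq> canalizing_set n f})
           = 2 ^ (card S + 1) * (2 ^ 2 ^ (n - card S) - 1) - (if card S = 1 then 2 else 0)"
proof (cases "card S = 1")
  case True
  then obtain i where S: "S = {i}" by (auto simp: card_Suc_eq)
  then have "i < n" using assms(1) by simp
  then have "int (card {f\<in>nonconst_funs n. canalizing_var n f i} + 6) = int (4 * 2 ^ 2 ^ (n - 1))"
    by (subst card_nonconst_canalizing_var) simp_all
  moreover have "{i} \<subseteq> canalizing_set n f \<longleftrightarrow> canalizing_var n f i" for f
    using \<open>i < n\<close> by (simp add: canalizing_set_def)
  ultimately show ?thesis
    using S by (simp add: algebra_simps)
next
  case False
  moreover have "card S \<noteq> 0"
    using assms finite_subset[OF assms(1)] by simp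
  ultimately have "2 \<le> card S" by linarith
  then show ?thesis
    using card_nonconst_canalizing_on[OF assms(1)] False by (simp add: of_nat_diff)
qed

lemma sum_card_nonconst_canalizing_on:
  assumes "1 \<le> r"
  shows "(\<Sum>S | S \<subseteq> {..<n} \<and> card S = r.
            int (card {f\<in>nonconst_funs n. S \<subseteq> canalizing_set n f}))
         = int (n choose r) * (2 ^ (r + 1) * (2 ^ 2 ^ (n - r) - 1) - (if r = 1 then 2 else 0))"
proof -
  have "(\<Sum>S | S \<subseteq> {..<n} \<and> card S = r.
            int (card {f\<in>nonconst_funs n. S \<subseteq> canalizing_set n f}))
      = (\<Sum>S | S \<subseteq> {..<n} \<and> card S = r.
            2 ^ (r + 1) * (2 ^ 2 ^ (n - r) - 1) - (if r = 1 then 2 else 0))"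
  proof (rule sum.cong[OF refl])
    fix S assume "S \<in> {S. S \<subseteq> {..<n} \<and> card S = r}"
    then have S: "S \<subseteq> {..<n}" "card S = r" by auto
    moreover from S assms have "S \<noteq> {}" by auto
    ultimately show "int (card {f\<in>nonconst_funs n. S \<subseteq> canalizing_set n f})
        = 2 ^ (r + 1) * (2 ^ 2 ^ (n - r) - 1) - (if r = 1 then 2 else 0)"
      using int_card_nonconst_canalizing_on[of S n] by simp
  qed
  then show ?thesis by (simp add: n_subsets)
qed

lemma int_canal_count:
  assumes "1 \<le> k"
  shows "int (canal_count n k)
    = (\<Sum>r=k..n. int (r choose k) * (-1) ^ (r - k) * int (n choose r) * 2 ^ (r + 1)
                  * (2 ^ 2 ^ (n - r) - 1))
      - (if k = 1 then 2 * int n else 0) + (if k = n then 2 else 0)"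
proof -
  let ?T = "\<lambda>r. 2 ^ (r + 1) * (2 ^ 2 ^ (n - r) - 1) :: int"
  have "int (card {f\<in>nonconst_funs n. card (canalizing_set n f) = k})
      = (\<Sum>r=k..n. (-1) ^ (r - k) * int (r choose k) *
           (\<Sum>S | S \<subseteq> {..<n} \<and> card S = r.
              int (card {f\<in>nonconst_funs n. S \<subseteq> canalizing_set n f})))"
    using card_exactly_inclusion_exclusion[of "nonconst_funs n" "{..<n}" "canalizing_set n" k]
    by (simp add: nonconst_funs_def finite_bool_funs canalizing_set_def subset_iff)
  also have "\<dots> = (\<Sum>r=k..n. int (r choose k) * (-1) ^ (r - k) * int (n choose r) * ?T r
                              - (if r = 1 then 2 * int n else 0))"
  proof (rule sum.cong[OF refl])
    fix r assume "r \<in> {k..n}"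
    with assms show "(-1) ^ (r - k) * int (r choose k) *
          (\<Sum>S | S \<subseteq> {..<n} \<and> card S = r.
             int (card {f\<in>nonconst_funs n. S \<subseteq> canalizing_set n f}))
        = int (r choose k) * (-1) ^ (r - k) * int (n choose r) * ?T r
          - (if r = 1 then 2 * int n else 0)"
      by (cases "r = 1") (simp_all add: sum_card_nonconst_canalizing_on algebra_simps)
  qed
  also have "\<dots> = (\<Sum>r=k..n. int (r choose k) * (-1) ^ (r - k) * int (n choose r) * ?T r)
                  - (\<Sum>r=k..n. if r = 1 then 2 * int n else 0)"
    by (rule sum_subtractf)
  also have "(\<Sum>r=k..n. if r = 1 then 2 * int n else 0) = (if k = 1 then 2 * int n else 0)"
    using assms by (cases "n = 0") (auto simp: sum.delta)
  finally show ?thesis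
    using canal_count_eq_nonconst[of n k] by (simp add: mult.assoc)
qed

theorem mainTheorem8:
  fixes n k :: nat
  assumes "1 \<le> n" and "1 \<le> k" and "k \<le> n"
  shows "(1 < k \<and> k < n \<longrightarrow>
            int (canal_count n k) =
              (\<Sum>r=k..n. int (r choose k) * (-1) ^ (r - k) * int (n choose r) * 2 ^ (r + 1)
                          * (2 ^ (2 ^ (n - r)) - 1)))
       \<and> (1 < k \<and> k = n \<longrightarrow> int (canal_count n n) = 2 + 2 ^ (n + 1))
       \<and> (1 = k \<and> k < n \<longrightarrow>
            int (canal_count n 1) =
              2 * int n * (2 ^ (1 + 2 ^ (n - 1)) - 3)
              + (\<Sum>r=2..n. int r * (-1) ^ (r - 1) * int (n choose r) * 2 ^ (r + 1)
                          * (2 ^ (2 ^ (n - r)) - 1)))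
       \<and> (1 = k \<and> k = n \<longrightarrow> int (canal_count n 1) = 4)"
proof (intro conjI impI)
  show "int (canal_count n k) =
          (\<Sum>r=k..n. int (r choose k) * (-1) ^ (r - k) * int (n choose r) * 2 ^ (r + 1)
                      * (2 ^ (2 ^ (n - r)) - 1))" if "1 < k \<and> k < n"
    using int_canal_count[OF assms(2)] that by simp
  show "int (canal_count n n) = 2 + 2 ^ (n + 1)" if "1 < k \<and> k = n"
    using int_canal_count[of n n] that by simp
  show "int (canal_count n 1) = 4" if "1 = k \<and> k = n"
    using int_canal_count[of 1 1] that by simp
  show "int (canal_count n 1) =
          2 * int n * (2 ^ (1 + 2 ^ (n - 1)) - 3)
          + (\<Sum>r=2..n. int r * (-1) ^ (r - 1) * int (n choose r) * 2 ^ (r + 1)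
                      * (2 ^ (2 ^ (n - r)) - 1))" if "1 = k \<and> k < n"
  proof -
    let ?t = "\<lambda>r. int r * (-1) ^ (r - 1) * int (n choose r) * 2 ^ (r + 1) * (2 ^ 2 ^ (n - r) - 1)"
    have "n \<noteq> 1" using that by simp
    then have "int (canal_count n 1) = (\<Sum>r=1..n. ?t r) - 2 * int n"
      using int_canal_count[of 1 n] by simp
    also have "(\<Sum>r=1..n. ?t r) = ?t 1 + (\<Sum>r=2..n. ?t r)"
      using assms(1) by (simp add: sum.atLeast_Suc_atMost numeral_2_eq_2)
    finally show ?thesis by (simp add: algebra_simps)
  qed
qed

end
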